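(* Let $0<\gamma<1$ and $W_n=\inf\{t\ge0:N_n(t)\le\gamma n\}$. Then there exists a constant $C>0$, depending on $\Lambda$ and $\gamma$ but not on $n$, such that $E[W_n]\le C$ for all $n\ge2$.
   Context: Let $\Lambda$ be a nonzero finite measure on $[0,1]$. For $n\ge 1$, the $\Lambda$-coalescent started with $n$ blocks, $(\Pi_n(t))_{t\ge0}$, is the continuous-time Markov chain on partitions of $\{1,\dots,n\}$, started from the partition into singletons, in which, whenever there are $b$ blocks, each particular collection of $k\ge2$ blocks merges into a single block at rate $\lambda_{b,k}=\int_{[0,1]}p^{k-2}(1-p)^{b-k}\,\Lambda(dp)$, and no other transitions occur. $N_n(t)$ denotes the number of blocks of $\Pi_n(t)$. *)

theory Defs
  imports "HOL-Probability.Probability"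
begin

definition lambda_rate :: "real measure \<Rightarrow> nat \<Rightarrow> nat \<Rightarrow> real" where
  "lambda_rate \<Lambda> b k = (\<integral>p. p ^ (k - 2) * (1 - p) ^ (b - k) \<partial>\<Lambda>)"

(* Partitions of {1..n} are represented as sets of blocks (nat set set). *)
definition singleton_partition :: "nat \<Rightarrow> nat set set" where
  "singleton_partition n = (\<lambda>i. {i}) ` {1..n}"

definition merge_choices :: "nat set set \<Rightarrow> nat set set set" where
  "merge_choices P = {S. S \<subseteq> P \<and> 2 \<le> card S}"

definition merge_blocks :: "nat set set \<Rightarrow> nat set set \<Rightarrow> nat set set" where
  "merge_blocks P S = insert (\<Union>S) (P - S)"

definition total_rate :: "real measure \<Rightarrow> nat set set \<Rightarrow> real" where
  "total_rate \<Lambda> P = (\<Sum>S\<in>merge_choices P. lambda_rate \<Lambda> (card P) (card S))"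

definition jump_pmf :: "real measure \<Rightarrow> nat set set \<Rightarrow> nat set set pmf" where
  "jump_pmf \<Lambda> P = embed_pmf (\<lambda>S. if S \<in> merge_choices P
      then lambda_rate \<Lambda> (card P) (card S) / total_rate \<Lambda> P else 0)"

(* Embedded jump chain (sequence of visited partitions), run for at most m jumps;
   it stops when only one block is left.  Started from n singletons, m = n suffices. *)
primrec jump_path :: "real measure \<Rightarrow> nat \<Rightarrow> nat set set \<Rightarrow> nat set set list pmf" where
  "jump_path \<Lambda> 0 P = return_pmf [P]"
| "jump_path \<Lambda> (Suc m) P =
     (if card P \<le> 1 then return_pmf [P]
      else bind_pmf (jump_pmf \<Lambda> P)
             (\<lambda>S. map_pmf (\<lambda>ps. P # ps) (jump_path \<Lambda> m (merge_blocks P S))))"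

definition exp_dist :: "real \<Rightarrow> real measure" where
  "exp_dist l = density lborel (exponential_density l)"

(* Rate of the i-th holding time (dummy rate 1 for the final, absorbing state). *)
definition hold_rate :: "real measure \<Rightarrow> nat set set list \<Rightarrow> nat \<Rightarrow> real" where
  "hold_rate \<Lambda> ps i = (if Suc i < length ps then total_rate \<Lambda> (ps ! i) else 1)"

definition coalescent_space :: "(nat set set list \<times> (nat \<Rightarrow> real)) measure" where
  "coalescent_space = count_space UNIV \<Otimes>\<^sub>M (\<Pi>\<^sub>M i\<in>UNIV. lborel)"

(* Law of the Lambda-coalescent started with n blocks: jump chain plus
   independent exponential holding times (standard CTMC construction).
   An outcome is (ps, h): visited partitions ps and holding times h. *)
definition coalescent_measure :: "real measure \<Rightarrow> nat \<Rightarrow> (nat set set list \<times> (nat \<Rightarrow> real)) measure" where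
  "coalescent_measure \<Lambda> n =
     measure_pmf (jump_path \<Lambda> n (singleton_partition n)) \<bind>
       (\<lambda>ps. distr (\<Pi>\<^sub>M i\<in>UNIV. exp_dist (hold_rate \<Lambda> ps i)) coalescent_space (\<lambda>h. (ps, h)))"

definition jump_time :: "(nat \<Rightarrow> real) \<Rightarrow> nat \<Rightarrow> real" where
  "jump_time h j = (\<Sum>i<j. h i)"

(* Pi_n(t): the partition at time t (number of jumps that occurred by time t). *)
definition state_at :: "nat set set list \<times> (nat \<Rightarrow> real) \<Rightarrow> real \<Rightarrow> nat set set" where
  "state_at \<omega> t = fst \<omega> ! card {j. 0 < j \<and> j < length (fst \<omega>) \<and> jump_time (snd \<omega>) j \<le> t}"

definition block_count :: "nat set set list \<times> (nat \<Rightarrow> real) \<Rightarrow> real \<Rightarrow> nat" where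
  "block_count \<omega> t = card (state_at \<omega> t)"

(* W_n = inf{t >= 0 : N_n(t) <= gamma n}, valued in [0,\<infinity>] (inf of empty set = \<infinity>). *)
definition hitting_time :: "real \<Rightarrow> nat \<Rightarrow> nat set set list \<times> (nat \<Rightarrow> real) \<Rightarrow> ennreal" where
  "hitting_time \<gamma> n \<omega> = (INF t\<in>{t. 0 \<le> t \<and> real (block_count \<omega> t) \<le> \<gamma> * real n}. ennreal t)"

end

theory Submission
  imports Defs
begin

text \<open>Put \<open>\<theta> = \<gamma> n\<close>. With \<open>b\<close> blocks the coalescent jumps at the total rate \<open>\<lambda>_b\<close>, and a merger of
  \<open>k\<close> blocks removes \<open>k - 1\<close> of them. Averaging \<open>|S| - 1\<close> over a binomial random subset \<open>S\<close> of the
  \<open>b\<close> blocks and using \<open>(1 - p)^b \<ge> 1 - b p + (b - 1) p^2\<close> gives, after integration against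
  \<open>p^(-2) \<Lambda>(dp)\<close>, the drift estimate \<open>\<Sum>_S \<lambda>_{b,|S|} (|S| - 1) \<ge> \<Lambda>[0,1] (b - 1)\<close>. Hence \<open>a N\<close> with
  \<open>a = 2 / (\<Lambda>[0,1] \<theta>)\<close> is a Lyapunov function: while more than \<open>\<theta>\<close> blocks remain, a jump lowers its
  conditional expectation by at least the mean holding time \<open>1 / \<lambda>_b\<close>. Summing along the jump chain
  gives \<open>E[W_n] \<le> a n = 2 / (\<Lambda>[0,1] \<gamma>)\<close>.\<close>

section \<open>Binomial sums over subsets\<close>

lemma sum_Pow_insert:
  assumes "finite F" "x \<notin> F"
  shows "(\<Sum>S\<in>Pow (insert x F). g S) = (\<Sum>S\<in>Pow F. g S) + (\<Sum>S\<in>Pow F. g (insert x S))"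
proof -
  have "inj_on (insert x) (Pow F)"
    using assms unfolding inj_on_def by (auto simp: insert_ident)
  moreover have "Pow F \<inter> insert x ` Pow F = {}"
    using assms by auto
  ultimately show ?thesis
    unfolding Pow_insert using assms by (simp add: sum.union_disjoint sum.reindex)
qed

lemma card_insert_Pow:
  assumes "finite F" "x \<notin> F" "S \<in> Pow F"
  shows "card (insert x S) = Suc (card S)" "card S \<le> card F"
proof -
  have "finite S" "x \<notin> S" "S \<subseteq> F"
    using assms finite_subset by auto
  then show "card (insert x S) = Suc (card S)" "card S \<le> card F"
    using assms(1) by (auto intro: card_mono)
qed

lemma sum_Pow_binomial:
  fixes p q :: "'a :: comm_semiring_1"
  assumes "finite P"
  shows "(\<Sum>S\<in>Pow P. p ^ card S * q ^ (card P - card S)) = (p + q) ^ card P"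
  using assms
proof (induction P rule: finite_induct)
  case (insert x F)
  have "(\<Sum>S\<in>Pow (insert x F). p ^ card S * q ^ (card (insert x F) - card S))
      = (\<Sum>S\<in>Pow F. q * (p ^ card S * q ^ (card F - card S)))
        + (\<Sum>S\<in>Pow F. p * (p ^ card S * q ^ (card F - card S)))"
    using insert card_insert_Pow[OF insert(1,2)] by (simp add: sum_Pow_insert Suc_diff_le mult_ac)
  also have "\<dots> = (p + q) ^ card (insert x F)"
    using insert by (simp add: sum_distrib_left[symmetric] algebra_simps)
  finally show ?case .
qed simp

lemma sum_Pow_binomial_card:
  fixes p q :: "'a :: comm_semiring_1"
  assumes "finite P" "p + q = 1"
  shows "(\<Sum>S\<in>Pow P. p ^ card S * q ^ (card P - card S) * of_nat (card S)) = of_nat (card P) * p"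
  using assms(1)
proof (induction P rule: finite_induct)
  case (insert x F)
  have "(\<Sum>S\<in>Pow (insert x F). p ^ card S * q ^ (card (insert x F) - card S) * of_nat (card S))
      = (\<Sum>S\<in>Pow F. q * (p ^ card S * q ^ (card F - card S) * of_nat (card S)))
        + (\<Sum>S\<in>Pow F. p * (p ^ card S * q ^ (card F - card S) * of_nat (card S)))
        + p * (\<Sum>S\<in>Pow F. p ^ card S * q ^ (card F - card S))"
    using insert card_insert_Pow[OF insert(1,2)]
    by (simp add: sum_Pow_insert Suc_diff_le sum.distrib sum_distrib_left algebra_simps)
  also have "\<dots> = (p + q) * (of_nat (card F) * p) + p * (p + q) ^ card F"
    using insert sum_Pow_binomial[OF insert(1), of p q]
    by (simp add: sum_distrib_left[symmetric] algebra_simps)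
  also have "\<dots> = of_nat (card (insert x F)) * p"
    using insert assms(2) by (simp add: algebra_simps)
  finally show ?case .
qed simp

lemma power_one_minus_lower_bound:
  fixes p :: real
  assumes "0 \<le> p" "p \<le> 1" "1 \<le> b"
  shows "(real b - 1) * p\<^sup>2 \<le> real b * p - 1 + (1 - p) ^ b"
  using assms(3)
proof (induction b rule: dec_induct)
  case (step m)
  have "(1 - p) ^ m \<le> 1 - p"
    using power_decreasing[of 1 m "1 - p"] assms step(1) by simp
  then have "p * p \<le> p * (1 - (1 - p) ^ m)"
    using assms by (intro mult_left_mono) auto
  then show ?case
    using step(3) by (simp add: algebra_simps power2_eq_square)
qed simp

section \<open>Merger rates\<close>

lemma merge_choices_subset_Pow: "merge_choices P \<subseteq> Pow P"
  unfolding merge_choices_def by auto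

lemma finite_merge_choices: "finite P \<Longrightarrow> finite (merge_choices P)"
  using merge_choices_subset_Pow by (rule finite_subset) simp

lemma sum_merge_choices_excess_ge:
  fixes p :: real
  assumes "finite P" "2 \<le> card P" "0 \<le> p" "p \<le> 1"
  shows "real (card P) - 1 \<le>
    (\<Sum>S\<in>merge_choices P. p ^ (card S - 2) * (1 - p) ^ (card P - card S) * (real (card S) - 1))"
    (is "_ \<le> (\<Sum>S\<in>_. ?w S)")
proof (cases "p = 0")
  case True
  \<comment> \<open>Since \<open>0 ^ 0 = 1\<close>, exactly the pairs contribute, each with weight \<open>1\<close>.\<close>
  let ?pairs = "{S. S \<subseteq> P \<and> card S = 2}"
  have "2 * (card P - 1) \<le> card P * (card P - 1)"
    using assms(2) by simp
  then have "card P - 1 \<le> card P choose 2"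
    using div_le_mono[of "2 * (card P - 1)" _ 2] by (simp add: choose_two)
  then have "real (card P) - 1 \<le> real (card P choose 2)"
    using assms(2) by linarith
  also have "\<dots> = (\<Sum>S\<in>?pairs. ?w S)"
    using True n_subsets[OF assms(1), of 2] by simp
  also have "\<dots> \<le> (\<Sum>S\<in>merge_choices P. ?w S)"
    using finite_merge_choices[OF assms(1)] True
    by (intro sum_mono2) (auto simp: merge_choices_def)
  finally show ?thesis .
next
  case False
  let ?b = "card P" and ?q = "1 - p"
  \<comment> \<open>The correction at \<open>S = {}\<close> makes all subsets with fewer than two elements contribute \<open>0\<close>.\<close>
  define f :: "nat set set \<Rightarrow> real"
    where "f S = p ^ card S * ?q ^ (?b - card S) * (real (card S) - 1) + (if S = {} then ?q ^ ?b else 0)" for S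
  have "p\<^sup>2 * (\<Sum>S\<in>merge_choices P. ?w S) = (\<Sum>S\<in>merge_choices P. f S)"
    unfolding sum_distrib_left
  proof (rule sum.cong[OF refl])
    fix S assume "S \<in> merge_choices P"
    then have "2 \<le> card S" "S \<noteq> {}" unfolding merge_choices_def by auto
    then have "p ^ card S = p\<^sup>2 * p ^ (card S - 2)"
      by (metis le_add_diff_inverse power_add)
    then show "p\<^sup>2 * ?w S = f S"
      unfolding f_def using \<open>S \<noteq> {}\<close> by simp
  qed
  also have "\<dots> = (\<Sum>S\<in>Pow P. f S)"
  proof (rule sum.mono_neutral_left)
    show "\<forall>S\<in>Pow P - merge_choices P. f S = 0"
    proof
      fix S assume S: "S \<in> Pow P - merge_choices P"
      then have "finite S" "card S = 0 \<or> card S = 1"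
        using assms(1) finite_subset unfolding merge_choices_def by auto
      then show "f S = 0" unfolding f_def by auto
    qed
  qed (use assms(1) merge_choices_subset_Pow in auto)
  also have "\<dots> = real ?b * p - 1 + ?q ^ ?b"
    using sum_Pow_binomial[OF assms(1), of p ?q] sum_Pow_binomial_card[OF assms(1), of p ?q] assms(1)
    by (simp add: f_def sum.distrib sum_subtractf right_diff_distrib sum.delta)
  also have "\<dots> \<ge> (real ?b - 1) * p\<^sup>2"
    using power_one_minus_lower_bound[OF assms(3,4), of ?b] assms(2) by simp
  finally show ?thesis
    using False assms(3) by (simp add: mult.commute)
qed

locale lambda_coalescent =
  fixes \<Lambda> :: "real measure"
  assumes finite_measure: "finite_measure \<Lambda>"
    and sets_eq_borel: "sets \<Lambda> = sets borel"
    and outside_unit_interval: "emeasure \<Lambda> (- {0..1}) = 0"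
    and nontrivial: "emeasure \<Lambda> {0..1} \<noteq> 0"
begin

interpretation finite_measure \<Lambda> by (rule finite_measure)

definition mass :: real where "mass = measure \<Lambda> (space \<Lambda>)"

lemma space_eq_UNIV: "space \<Lambda> = UNIV"
  using sets_eq_imp_space_eq[OF sets_eq_borel] by simp

lemma AE_unit_interval: "AE p in \<Lambda>. 0 \<le> p \<and> p \<le> 1"
proof (rule AE_I')
  show "- {0..1} \<in> null_sets \<Lambda>"
    using outside_unit_interval sets_eq_borel by (simp add: null_sets_def)
qed (auto simp: space_eq_UNIV)

lemma integrable_Bernstein_weight: "integrable \<Lambda> (\<lambda>p::real. p ^ i * (1 - p) ^ j * r)"
proof (rule integrable_const_bound[where B="\<bar>r\<bar>"])
  show "AE p in \<Lambda>. norm (p ^ i * (1 - p) ^ j * r) \<le> \<bar>r\<bar>"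
    using AE_unit_interval
  proof eventually_elim
    case (elim p)
    then have "p ^ i * (1 - p) ^ j \<le> 1" "0 \<le> p ^ i * (1 - p) ^ j"
      by (auto intro!: mult_le_one power_le_one)
    then show ?case
      by (simp add: abs_mult mult_left_le_one_le)
  qed
  show "(\<lambda>p::real. p ^ i * (1 - p) ^ j * r) \<in> borel_measurable \<Lambda>"
    using sets_eq_borel by (subst measurable_cong_sets[of _ borel]) auto
qed

lemma lambda_rate_nonneg: "0 \<le> lambda_rate \<Lambda> b k"
  unfolding lambda_rate_def by (rule integral_nonneg_AE) (use AE_unit_interval in auto)

lemma mass_pos: "0 < mass"
proof -
  have "emeasure \<Lambda> {0..1} \<le> emeasure \<Lambda> (space \<Lambda>)"
    by (rule emeasure_mono) (auto simp: space_eq_UNIV sets_eq_borel)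
  then have "0 < emeasure \<Lambda> (space \<Lambda>)"
    using nontrivial by (metis less_le_trans not_gr_zero)
  then show ?thesis
    unfolding mass_def by (simp add: emeasure_eq_measure)
qed

lemma sum_merge_rate_excess_ge:
  assumes "finite P" "2 \<le> card P"
  shows "mass * (real (card P) - 1)
    \<le> (\<Sum>S\<in>merge_choices P. lambda_rate \<Lambda> (card P) (card S) * (real (card S) - 1))"
proof -
  let ?w = "\<lambda>p S. p ^ (card S - 2) * (1 - p) ^ (card P - card S) * (real (card S) - 1)"
  have "mass * (real (card P) - 1) = (\<integral>p. real (card P) - 1 \<partial>\<Lambda>)"
    unfolding mass_def by simp
  also have "\<dots> \<le> (\<integral>p. (\<Sum>S\<in>merge_choices P. ?w p S) \<partial>\<Lambda>)"
  proof (rule integral_mono_AE)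
    show "AE p in \<Lambda>. real (card P) - 1 \<le> (\<Sum>S\<in>merge_choices P. ?w p S)"
      using AE_unit_interval by eventually_elim (simp add: sum_merge_choices_excess_ge[OF assms])
  qed (auto intro: integrable_Bernstein_weight)
  also have "\<dots> = (\<Sum>S\<in>merge_choices P. lambda_rate \<Lambda> (card P) (card S) * (real (card S) - 1))"
    unfolding lambda_rate_def
    using integrable_Bernstein_weight[where r=1]
    by (subst Bochner_Integration.integral_sum) (simp_all add: integrable_Bernstein_weight)
  finally show ?thesis .
qed

lemma mass_le_total_rate:
  assumes "finite P" "2 \<le> card P"
  shows "mass \<le> total_rate \<Lambda> P"
proof -
  have "mass * (real (card P) - 1)
      \<le> (\<Sum>S\<in>merge_choices P. lambda_rate \<Lambda> (card P) (card S) * (real (card P) - 1))"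
  proof (rule order_trans[OF sum_merge_rate_excess_ge[OF assms]], rule sum_mono)
    fix S assume "S \<in> merge_choices P"
    then have "card S \<le> card P"
      using assms(1) unfolding merge_choices_def by (auto intro: card_mono)
    then show "lambda_rate \<Lambda> (card P) (card S) * (real (card S) - 1)
        \<le> lambda_rate \<Lambda> (card P) (card S) * (real (card P) - 1)"
      by (intro mult_left_mono lambda_rate_nonneg) simp
  qed
  also have "\<dots> = total_rate \<Lambda> P * (real (card P) - 1)"
    unfolding total_rate_def by (simp add: sum_distrib_right)
  finally show ?thesis
    using assms(2) by (simp add: mult_le_cancel_right)
qed

lemma total_rate_nonneg: "0 \<le> total_rate \<Lambda> P"
  unfolding total_rate_def by (intro sum_nonneg lambda_rate_nonneg)

lemma total_rate_pos: "finite P \<Longrightarrow> 2 \<le> card P \<Longrightarrow> 0 < total_rate \<Lambda> P"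
  using mass_le_total_rate mass_pos by (meson less_le_trans)

end

section \<open>The jump chain\<close>

lemma finite_merge_blocks: "finite P \<Longrightarrow> finite (merge_blocks P S)"
  unfolding merge_blocks_def by simp

lemma card_merge_blocks_le:
  assumes "finite P" "S \<in> merge_choices P"
  shows "card (merge_blocks P S) + card S \<le> card P + 1"
proof -
  have S: "S \<subseteq> P" "finite S"
    using assms finite_subset unfolding merge_choices_def by auto
  have "card (merge_blocks P S) \<le> Suc (card (P - S))"
    unfolding merge_blocks_def using assms(1) by (simp add: card_insert_if)
  also have "card (P - S) = card P - card S"
    using S by (simp add: card_Diff_subset)
  finally show ?thesis
    using card_mono[OF assms(1) S(1)] by simp
qed

text \<open>After at most \<open>m\<close> jumps the chain has either stopped with a single block left,
  or lost at least one block at each of the \<open>m\<close> jumps.\<close>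
definition jump_path_invariant :: "nat \<Rightarrow> nat set set \<Rightarrow> nat set set list \<Rightarrow> bool" where
  "jump_path_invariant m P ps \<longleftrightarrow> ps \<noteq> [] \<and> (\<forall>Q\<in>set ps. finite Q \<and> card Q \<le> card P)
     \<and> sorted_wrt (\<lambda>A B. card B \<le> card A) ps
     \<and> (\<forall>i. Suc i < length ps \<longrightarrow> 2 \<le> card (ps ! i))
     \<and> (card (last ps) \<le> 1 \<or> card (last ps) + m \<le> card P)"

context lambda_coalescent
begin

lemma pmf_jump_pmf:
  assumes "finite P" "2 \<le> card P"
  shows "pmf (jump_pmf \<Lambda> P) S =
    (if S \<in> merge_choices P then lambda_rate \<Lambda> (card P) (card S) / total_rate \<Lambda> P else 0)"
proof -
  let ?f = "\<lambda>S. if S \<in> merge_choices P then lambda_rate \<Lambda> (card P) (card S) / total_rate \<Lambda> P else 0"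
  have pos: "0 < total_rate \<Lambda> P"
    using total_rate_pos[OF assms] .
  have nonneg: "0 \<le> ?f S" for S
    using pos lambda_rate_nonneg by simp
  have "(\<integral>\<^sup>+S. ennreal (?f S) \<partial>count_space UNIV) = ennreal (\<Sum>S\<in>merge_choices P. ?f S)"
    using finite_merge_choices[OF assms(1)] nonneg
    by (subst nn_integral_count_space') (auto intro: sum_ennreal)
  also have "(\<Sum>S\<in>merge_choices P. ?f S) = 1"
    using pos unfolding total_rate_def by (simp add: sum_divide_distrib[symmetric])
  finally show ?thesis
    unfolding jump_pmf_def using pmf_embed_pmf[of ?f, OF nonneg] by simp
qed

lemma set_pmf_jump_pmf:
  assumes "finite P" "2 \<le> card P" "S \<in> set_pmf (jump_pmf \<Lambda> P)"
  shows "S \<in> merge_choices P"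
  using assms pmf_jump_pmf[OF assms(1,2), of S] by (auto simp: set_pmf_eq split: if_splits)

lemma set_pmf_jump_path_invariant:
  assumes "finite P" "ps \<in> set_pmf (jump_path \<Lambda> m P)"
  shows "jump_path_invariant m P ps"
  using assms
proof (induction m arbitrary: P ps)
  case 0
  then show ?case by (simp add: jump_path_invariant_def)
next
  case (Suc m)
  show ?case
  proof (cases "card P \<le> 1")
    case True
    then show ?thesis using Suc.prems by (simp add: jump_path_invariant_def)
  next
    case False
    then have two: "2 \<le> card P" by simp
    from Suc.prems False obtain S ps'
      where S: "S \<in> set_pmf (jump_pmf \<Lambda> P)"
        and ps': "ps' \<in> set_pmf (jump_path \<Lambda> m (merge_blocks P S))"
        and ps: "ps = P # ps'"
      by auto
    let ?P' = "merge_blocks P S"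
    have S_choice: "S \<in> merge_choices P"
      using set_pmf_jump_pmf[OF Suc.prems(1) two S] .
    then have "2 \<le> card S"
      unfolding merge_choices_def by auto
    then have "card ?P' < card P"
      using card_merge_blocks_le[OF Suc.prems(1) S_choice] by linarith
    moreover have "jump_path_invariant m ?P' ps'"
      using Suc.IH[OF finite_merge_blocks[OF Suc.prems(1)] ps'] .
    ultimately have "ps' \<noteq> []" "\<forall>Q\<in>set ps'. finite Q \<and> card Q < card P"
      and sorted: "sorted_wrt (\<lambda>A B. card B \<le> card A) ps'"
      and merging: "\<forall>i. Suc i < length ps' \<longrightarrow> 2 \<le> card (ps' ! i)"
      and "card (last ps') \<le> 1 \<or> card (last ps') + Suc m \<le> card P"
      unfolding jump_path_invariant_def by auto
    moreover have "\<forall>i. Suc i < length ps \<longrightarrow> 2 \<le> card (ps ! i)"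
      using merging two ps by (auto simp: nth_Cons split: nat.split)
    ultimately show ?thesis
      using ps Suc.prems(1) unfolding jump_path_invariant_def by fastforce
  qed
qed

end

section \<open>Expected time above the threshold\<close>

definition steps_above :: "real \<Rightarrow> nat set set list \<Rightarrow> nat" where
  "steps_above \<theta> ps = length (takeWhile (\<lambda>Q. \<theta> < real (card Q)) ps)"

definition mean_time_above :: "real measure \<Rightarrow> real \<Rightarrow> nat set set list \<Rightarrow> real" where
  "mean_time_above \<Lambda> \<theta> ps = (\<Sum>i<steps_above \<theta> ps. 1 / total_rate \<Lambda> (ps ! i))"

lemma steps_above_Cons:
  "steps_above \<theta> (P # ps) = (if \<theta> < real (card P) then Suc (steps_above \<theta> ps) else 0)"
  unfolding steps_above_def by simp

lemma mean_time_above_Nil: "mean_time_above \<Lambda> \<theta> [] = 0"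
  unfolding mean_time_above_def steps_above_def by simp

lemma mean_time_above_Cons:
  "mean_time_above \<Lambda> \<theta> (P # ps) =
    (if \<theta> < real (card P) then 1 / total_rate \<Lambda> P + mean_time_above \<Lambda> \<theta> ps else 0)"
  unfolding mean_time_above_def steps_above_Cons
  by (simp del: sum.lessThan_Suc add: sum.lessThan_Suc_shift)

context lambda_coalescent
begin

lemma mean_time_above_nonneg: "0 \<le> mean_time_above \<Lambda> \<theta> ps"
  unfolding mean_time_above_def using total_rate_nonneg by (intro sum_nonneg) simp

lemma mean_time_above_singleton_le:
  assumes "1 \<le> \<theta>" "0 < a" "2 \<le> a * mass * \<theta>"
  shows "mean_time_above \<Lambda> \<theta> [P] \<le> a * real (card P)"
proof (cases "\<theta> < real (card P)")
  case True
  then have two: "2 \<le> card P"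
    using assms(1) by simp
  then have "finite P"
    by (metis card.infinite not_numeral_le_zero)
  then have "1 / total_rate \<Lambda> P \<le> 1 / mass"
    using mass_le_total_rate[OF _ two] mass_pos by (intro divide_left_mono) auto
  also have "1 / mass \<le> a * real (card P)"
  proof -
    have "a * mass * \<theta> \<le> a * mass * real (card P)"
      using True assms mass_pos by (intro mult_left_mono) auto
    then have "1 \<le> a * real (card P) * mass"
      using assms(3) by (simp add: mult_ac)
    then show ?thesis
      using mass_pos by (simp add: divide_le_eq)
  qed
  finally show ?thesis
    using True by (simp add: mean_time_above_Cons mean_time_above_Nil)
qed (use assms in \<open>simp add: mean_time_above_Cons mean_time_above_Nil\<close>)

text \<open>The Lyapunov step for \<open>a * card P\<close>: a jump costs the mean holding time
  \<open>1 / total_rate\<close>, and by the drift estimate it lowers \<open>a * card P\<close> on average by at least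
  \<open>a * mass * (card P - 1) / total_rate \<ge> 1 / total_rate\<close> as long as \<open>card P > \<theta>\<close>.\<close>
lemma merge_step_expectation_le:
  assumes P: "finite P" "2 \<le> card P" "\<theta> < real (card P)" and a: "0 < a" "2 \<le> a * mass * \<theta>"
  shows "(\<Sum>S\<in>merge_choices P. (1 / total_rate \<Lambda> P + a * real (card (merge_blocks P S))) *
            (lambda_rate \<Lambda> (card P) (card S) / total_rate \<Lambda> P)) \<le> a * real (card P)"
proof -
  define t where "t = total_rate \<Lambda> P"
  define b where "b = real (card P)"
  define l :: "nat set set \<Rightarrow> real" where "l S = lambda_rate \<Lambda> (card P) (card S)" for S
  define D where "D = (\<Sum>S\<in>merge_choices P. l S * (real (card S) - 1))"
  have t: "0 < t"
    unfolding t_def using total_rate_pos[OF P(1,2)] .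
  have "(\<Sum>S\<in>merge_choices P. (1 / t + a * real (card (merge_blocks P S))) * (l S / t))
      \<le> (\<Sum>S\<in>merge_choices P. (1 / t + a * b) * (l S / t) - a * (l S * (real (card S) - 1) / t))"
  proof (rule sum_mono)
    fix S assume S: "S \<in> merge_choices P"
    have "real (card (merge_blocks P S)) \<le> b - (real (card S) - 1)"
      using card_merge_blocks_le[OF P(1) S] unfolding b_def by linarith
    then have "(1 / t + a * real (card (merge_blocks P S))) * (l S / t)
        \<le> (1 / t + a * (b - (real (card S) - 1))) * (l S / t)"
      using a t lambda_rate_nonneg unfolding l_def by (intro mult_right_mono) auto
    then show "(1 / t + a * real (card (merge_blocks P S))) * (l S / t)
        \<le> (1 / t + a * b) * (l S / t) - a * (l S * (real (card S) - 1) / t)"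
      by (simp add: algebra_simps diff_divide_distrib)
  qed
  also have "\<dots> = (1 / t + a * b) * ((\<Sum>S\<in>merge_choices P. l S) / t) - a * (D / t)"
    unfolding D_def by (simp add: sum_subtractf sum_distrib_left sum_divide_distrib)
  also have "\<dots> = 1 / t + a * b - a * D / t"
    using t unfolding t_def l_def total_rate_def by simp
  also have "\<dots> \<le> a * b"
  proof -
    have "mass * (b - 1) \<le> D"
      unfolding D_def l_def b_def using sum_merge_rate_excess_ge[OF P(1,2)] by simp
    moreover have "\<theta> / 2 \<le> b - 1"
      using P(2,3) unfolding b_def by linarith
    ultimately have "mass * (\<theta> / 2) \<le> D"
      using mass_pos by (meson mult_left_mono less_imp_le order_trans)
    then have "a * (mass * (\<theta> / 2)) \<le> a * D"
      using a(1) by (intro mult_left_mono) auto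
    then have "a * mass * \<theta> / 2 \<le> a * D"
      by (simp add: mult_ac)
    then have "1 \<le> a * D"
      using a(2) by linarith
    then show ?thesis
      using t by (simp add: divide_right_mono)
  qed
  finally show ?thesis unfolding t_def l_def b_def .
qed

lemma nn_integral_mean_time_above_le:
  assumes "finite P" "1 \<le> \<theta>" "0 < a" "2 \<le> a * mass * \<theta>"
  shows "(\<integral>\<^sup>+ps. mean_time_above \<Lambda> \<theta> ps \<partial>jump_path \<Lambda> m P) \<le> a * real (card P)"
  using assms(1)
proof (induction m arbitrary: P)
  case 0
  then show ?case
    using mean_time_above_singleton_le[OF assms(2-4), of P] by (simp add: ennreal_leI)
next
  case (Suc m)
  consider "card P \<le> 1" | "2 \<le> card P" "\<not> \<theta> < real (card P)" | "2 \<le> card P" "\<theta> < real (card P)"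
    by linarith
  then show ?case
  proof cases
    case 1
    then show ?thesis
      using mean_time_above_singleton_le[OF assms(2-4), of P] by (simp add: ennreal_leI)
  next
    case 2
    then show ?thesis by (simp add: mean_time_above_Cons)
  next
    case 3
    define g where "g S = 1 / total_rate \<Lambda> P + a * real (card (merge_blocks P S))" for S
    have g_nonneg: "0 \<le> g S" for S
      unfolding g_def using total_rate_nonneg assms(3) by simp
    have rest: "(\<integral>\<^sup>+ps. mean_time_above \<Lambda> \<theta> (P # ps) \<partial>jump_path \<Lambda> m (merge_blocks P S)) \<le> g S" for S
    proof -
      have "(\<integral>\<^sup>+ps. mean_time_above \<Lambda> \<theta> (P # ps) \<partial>jump_path \<Lambda> m (merge_blocks P S))
          = ennreal (1 / total_rate \<Lambda> P) + (\<integral>\<^sup>+ps. mean_time_above \<Lambda> \<theta> ps \<partial>jump_path \<Lambda> m (merge_blocks P S))"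
        using 3 total_rate_nonneg mean_time_above_nonneg
        by (simp add: mean_time_above_Cons ennreal_plus nn_integral_add measure_pmf.emeasure_space_1)
      also have "\<dots> \<le> ennreal (1 / total_rate \<Lambda> P) + ennreal (a * real (card (merge_blocks P S)))"
        using Suc.IH[OF finite_merge_blocks[OF Suc.prems]] by (rule add_left_mono)
      also have "\<dots> = g S"
        unfolding g_def using total_rate_nonneg assms(3) by (simp add: ennreal_plus)
      finally show ?thesis .
    qed
    have "(\<integral>\<^sup>+ps. mean_time_above \<Lambda> \<theta> ps \<partial>jump_path \<Lambda> (Suc m) P)
        = (\<integral>\<^sup>+S. (\<integral>\<^sup>+ps. mean_time_above \<Lambda> \<theta> (P # ps) \<partial>jump_path \<Lambda> m (merge_blocks P S)) \<partial>jump_pmf \<Lambda> P)"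
      using 3 by simp
    also have "\<dots> \<le> (\<integral>\<^sup>+S. g S \<partial>jump_pmf \<Lambda> P)"
      by (intro nn_integral_mono rest)
    also have "\<dots> = (\<Sum>S\<in>merge_choices P. ennreal (g S) * pmf (jump_pmf \<Lambda> P) S)"
      using set_pmf_jump_pmf[OF Suc.prems 3(1)] finite_merge_choices[OF Suc.prems]
      by (intro nn_integral_measure_pmf_support) auto
    also have "\<dots> = (\<Sum>S\<in>merge_choices P. g S * (lambda_rate \<Lambda> (card P) (card S) / total_rate \<Lambda> P))"
      using pmf_jump_pmf[OF Suc.prems 3(1)] g_nonneg total_rate_nonneg lambda_rate_nonneg
      by (simp add: ennreal_mult[symmetric] sum_ennreal)
    also have "\<dots> \<le> a * real (card P)"
      unfolding g_def by (intro ennreal_leI merge_step_expectation_le[OF Suc.prems 3 assms(3,4)])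
    finally show ?thesis .
  qed
qed

end

section \<open>Holding times\<close>

definition crosses_threshold :: "real \<Rightarrow> nat set set list \<Rightarrow> bool" where
  "crosses_threshold \<theta> ps \<longleftrightarrow> steps_above \<theta> ps < length ps
     \<and> (\<forall>j<length ps. steps_above \<theta> ps \<le> j \<longrightarrow> real (card (ps ! j)) \<le> \<theta>)"

lemma jump_path_invariant_crosses_threshold:
  assumes "jump_path_invariant (card P) P ps" "1 \<le> \<theta>"
  shows "crosses_threshold \<theta> ps"
proof -
  let ?above = "\<lambda>Q. \<theta> < real (card Q)"
  have "ps \<noteq> []" and sorted: "sorted_wrt (\<lambda>A B. card B \<le> card A) ps"
    and "card (last ps) \<le> 1"
    using assms(1) unfolding jump_path_invariant_def by auto
  then have "\<not> ?above (last ps)" "last ps \<in> set ps"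
    using assms(2) by auto
  then have "takeWhile ?above ps \<noteq> ps"
    by (metis takeWhile_eq_all_conv)
  then have K: "steps_above \<theta> ps < length ps"
    unfolding steps_above_def by (metis length_takeWhile_le le_neq_implies_less takeWhile_eq_take take_all)
  then have "\<not> ?above (ps ! steps_above \<theta> ps)"
    unfolding steps_above_def by (rule nth_length_takeWhile)
  moreover have "card (ps ! j) \<le> card (ps ! steps_above \<theta> ps)"
    if "j < length ps" "steps_above \<theta> ps < j" for j
    using sorted_wrt_nth_less[OF sorted that(2,1)] .
  ultimately show ?thesis
    unfolding crosses_threshold_def using K by (force simp: le_less)
qed

definition time_above :: "real \<Rightarrow> nat set set list \<times> (nat \<Rightarrow> real) \<Rightarrow> ennreal" where
  "time_above \<theta> \<omega> = (if crosses_threshold \<theta> (fst \<omega>) \<and> (\<forall>i. 0 \<le> snd \<omega> i)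
     then ennreal (\<Sum>i<steps_above \<theta> (fst \<omega>). snd \<omega> i) else \<infinity>)"

lemma hitting_time_le_time_above: "hitting_time \<gamma> n \<omega> \<le> time_above (\<gamma> * real n) \<omega>"
proof (cases "crosses_threshold (\<gamma> * real n) (fst \<omega>) \<and> (\<forall>i. 0 \<le> snd \<omega> i)")
  case False
  then have "time_above (\<gamma> * real n) \<omega> = \<infinity>"
    unfolding time_above_def by (rule if_not_P)
  then show ?thesis by simp
next
  case True
  define \<theta> where "\<theta> = \<gamma> * real n"
  obtain ps h where \<omega>: "\<omega> = (ps, h)" by (cases \<omega>)
  define K where "K = steps_above \<theta> ps"
  define t where "t = (\<Sum>i<K. h i)"
  define A where "A = {j. 0 < j \<and> j < length ps \<and> jump_time h j \<le> t}"
  have h: "\<And>i. 0 \<le> h i" and K: "K < length ps"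
    and below: "\<And>j. j < length ps \<Longrightarrow> K \<le> j \<Longrightarrow> real (card (ps ! j)) \<le> \<theta>"
    using True unfolding \<theta>_def \<omega> K_def crosses_threshold_def by auto
  have A: "A \<subseteq> {1..<length ps}"
    unfolding A_def by auto
  \<comment> \<open>By time \<open>t\<close> at least \<open>K\<close> jumps have occurred, and from the \<open>K\<close>-th state on at most
    \<open>\<theta>\<close> blocks remain.\<close>
  have "{1..K} \<subseteq> A"
    unfolding A_def jump_time_def t_def using K h by (auto intro: sum_mono2)
  then have "card {1..K} \<le> card A"
    using A by (intro card_mono) (auto intro: finite_subset)
  then have "K \<le> card A"
    by simp
  moreover have "card A < length ps"
    using card_mono[OF _ A] K by simp
  ultimately have "real (block_count \<omega> t) \<le> \<gamma> * real n"
    using below unfolding block_count_def state_at_def \<omega> \<theta>_def A_def by simp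
  moreover have "0 \<le> t"
    unfolding t_def using h by (simp add: sum_nonneg)
  ultimately have "hitting_time \<gamma> n \<omega> \<le> ennreal t"
    unfolding hitting_time_def by (intro INF_lower) simp
  also have "ennreal t = time_above (\<gamma> * real n) \<omega>"
    using True unfolding time_above_def t_def K_def \<theta>_def \<omega> by simp
  finally show ?thesis .
qed

lemma measurable_time_above: "time_above \<theta> \<in> borel_measurable coalescent_space"
proof -
  let ?M = "count_space UNIV \<Otimes>\<^sub>M (\<Pi>\<^sub>M i\<in>(UNIV::nat set). (lborel::real measure))"
  have path: "(\<lambda>\<omega>. f (fst \<omega>)) \<in> measurable ?M (count_space UNIV)" for f :: "_ \<Rightarrow> 'b"
    by (rule measurable_compose[OF measurable_fst]) simp
  have [measurable]: "(\<lambda>\<omega>. snd \<omega> i) \<in> borel_measurable ?M" for i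
    by (rule measurable_compose[OF measurable_snd]) simp
  have "(\<lambda>\<omega>. ennreal (\<Sum>i<steps_above \<theta> (fst \<omega>). snd \<omega> i)) \<in> borel_measurable ?M"
    by (rule measurable_compose_countable[OF _ path]) measurable
  moreover have "Measurable.pred ?M (\<lambda>\<omega>. crosses_threshold \<theta> (fst \<omega>) \<and> (\<forall>i. 0 \<le> snd \<omega> i))"
    using path[of "crosses_threshold \<theta>"] by measurable
  ultimately show ?thesis
    unfolding time_above_def coalescent_space_def by measurable
qed

lemma sets_exp_dist: "sets (exp_dist l) = sets borel"
  unfolding exp_dist_def by simp

lemma prob_space_exp_dist: "0 < l \<Longrightarrow> prob_space (exp_dist l)"
  unfolding exp_dist_def by (rule prob_space_exponential_density)

lemma AE_exp_dist_nonneg: "AE x in exp_dist l. 0 \<le> x"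
  unfolding exp_dist_def by (subst AE_density) (auto simp: exponential_density_def)

lemma nn_integral_exp_dist:
  assumes "0 < l"
  shows "(\<integral>\<^sup>+x. ennreal x \<partial>exp_dist l) = ennreal (1 / l)"
proof -
  have "(\<integral>\<^sup>+x. ennreal x \<partial>exp_dist l) = (\<integral>\<^sup>+x. ennreal (erlang_density 0 l x * x ^ 1) \<partial>lborel)"
    unfolding exp_dist_def using assms
    by (subst nn_integral_density)
       (auto intro!: nn_integral_cong simp: exponential_density_def ennreal_mult[symmetric])
  also have "\<dots> = ennreal (1 / l)"
    using nn_integral_erlang_ith_moment[OF assms, of 0 1] by simp
  finally show ?thesis .
qed

text \<open>The holding rates with non-positive values replaced by \<open>1\<close>, so that the holding times
  form a probability kernel on all paths; on the support of the jump chain nothing changes.\<close>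
definition pos_hold_rate :: "real measure \<Rightarrow> nat set set list \<Rightarrow> nat \<Rightarrow> real" where
  "pos_hold_rate \<Lambda> ps i = (if 0 < hold_rate \<Lambda> ps i then hold_rate \<Lambda> ps i else 1)"

definition holding_kernel ::
    "real measure \<Rightarrow> nat set set list \<Rightarrow> (nat set set list \<times> (nat \<Rightarrow> real)) measure" where
  "holding_kernel \<Lambda> ps =
     distr (\<Pi>\<^sub>M i\<in>UNIV. exp_dist (pos_hold_rate \<Lambda> ps i)) coalescent_space (\<lambda>h. (ps, h))"

lemma pos_hold_rate_pos: "0 < pos_hold_rate \<Lambda> ps i"
  unfolding pos_hold_rate_def by simp

lemma measurable_Pair_holding_times:
  "(\<lambda>h. (ps, h)) \<in> measurable (\<Pi>\<^sub>M i\<in>UNIV. exp_dist (r i)) coalescent_space"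
proof -
  have "sets (\<Pi>\<^sub>M i\<in>UNIV. exp_dist (r i)) = sets (\<Pi>\<^sub>M i\<in>(UNIV::nat set). (lborel::real measure))"
    by (rule sets_PiM_cong) (auto simp: sets_exp_dist)
  then show ?thesis
    unfolding coalescent_space_def by (intro measurable_Pair measurable_ident_sets) simp_all
qed

lemma holding_kernel_subprob: "holding_kernel \<Lambda> ps \<in> space (subprob_algebra coalescent_space)"
proof -
  have "prob_space (\<Pi>\<^sub>M i\<in>UNIV. exp_dist (pos_hold_rate \<Lambda> ps i))"
    by (intro prob_space_PiM prob_space_exp_dist pos_hold_rate_pos)
  then have "prob_space (holding_kernel \<Lambda> ps)"
    unfolding holding_kernel_def
    by (rule prob_space.prob_space_distr) (rule measurable_Pair_holding_times)
  then show ?thesis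
    unfolding space_subprob_algebra holding_kernel_def by (auto simp: prob_space_imp_subprob_space)
qed

lemma bind_measure_pmf_cong:
  assumes "\<And>x. x \<in> set_pmf p \<Longrightarrow> f x = g x" "\<And>x. sets (f x) = sets K" "\<And>x. sets (g x) = sets K"
  shows "measure_pmf p \<bind> f = measure_pmf p \<bind> g"
proof -
  let ?x = "SOME x. x \<in> space (measure_pmf p)"
  have "subprob_algebra (f ?x) = subprob_algebra (g ?x)"
    unfolding subprob_algebra_def using assms(2,3) by simp
  moreover have "emeasure (measure_pmf p) (f -` A \<inter> space (measure_pmf p))
      = emeasure (measure_pmf p) (g -` A \<inter> space (measure_pmf p))" for A
  proof -
    have "(f -` A \<inter> space (measure_pmf p)) \<inter> set_pmf p = (g -` A \<inter> space (measure_pmf p)) \<inter> set_pmf p"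
      using assms(1) by auto
    then show ?thesis by (metis emeasure_Int_set_pmf)
  qed
  ultimately show ?thesis
    unfolding bind_def distr_def by simp
qed

lemma coalescent_measure_eq_bind:
  assumes "\<And>ps i. ps \<in> set_pmf (jump_path \<Lambda> n (singleton_partition n)) \<Longrightarrow> 0 < hold_rate \<Lambda> ps i"
  shows "coalescent_measure \<Lambda> n = measure_pmf (jump_path \<Lambda> n (singleton_partition n)) \<bind> holding_kernel \<Lambda>"
  unfolding coalescent_measure_def
proof (rule bind_measure_pmf_cong[where K = coalescent_space])
  fix ps assume "ps \<in> set_pmf (jump_path \<Lambda> n (singleton_partition n))"
  then have "hold_rate \<Lambda> ps = pos_hold_rate \<Lambda> ps"
    using assms unfolding pos_hold_rate_def by auto
  then show "distr (\<Pi>\<^sub>M i\<in>UNIV. exp_dist (hold_rate \<Lambda> ps i)) coalescent_space (Pair ps) = holding_kernel \<Lambda> ps"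
    unfolding holding_kernel_def by simp
qed (simp_all add: holding_kernel_def)

lemma nn_integral_time_above_holding_kernel:
  assumes crosses: "crosses_threshold \<theta> ps" and pos: "\<And>i. 0 < hold_rate \<Lambda> ps i"
  shows "(\<integral>\<^sup>+\<omega>. time_above \<theta> \<omega> \<partial>holding_kernel \<Lambda> ps) = mean_time_above \<Lambda> \<theta> ps"
proof -
  let ?r = "pos_hold_rate \<Lambda> ps"
  let ?M = "\<Pi>\<^sub>M i\<in>UNIV. exp_dist (?r i)"
  interpret P: product_prob_space "\<lambda>i. exp_dist (?r i)" UNIV
    by (intro product_prob_spaceI prob_space_exp_dist pos_hold_rate_pos)
  define K where "K = steps_above \<theta> ps"
  have K: "K < length ps"
    using crosses unfolding crosses_threshold_def K_def by simp
  have hold_rate_eq: "hold_rate \<Lambda> ps i = total_rate \<Lambda> (ps ! i)" if "i < K" for i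
    using K that unfolding hold_rate_def by simp
  have rate: "0 < total_rate \<Lambda> (ps ! i)" if "i < K" for i
    using pos[of i] hold_rate_eq[OF that] by simp
  have [measurable]: "(\<lambda>h. h i) \<in> borel_measurable ?M" for i
    using measurable_component_singleton[of i UNIV "\<lambda>i. exp_dist (?r i)"]
    by (simp add: measurable_cong_sets[OF refl sets_exp_dist])
  have "AE h in ?M. \<forall>i. 0 \<le> h i"
    unfolding AE_all_countable by (intro allI P.AE_component AE_exp_dist_nonneg) simp
  then have "(\<integral>\<^sup>+h. time_above \<theta> (ps, h) \<partial>?M) = (\<integral>\<^sup>+h. (\<Sum>i<K. ennreal (h i)) \<partial>?M)"
    using crosses by (auto intro!: nn_integral_cong_AE simp: time_above_def K_def sum_ennreal)
  moreover have "(\<integral>\<^sup>+\<omega>. time_above \<theta> \<omega> \<partial>holding_kernel \<Lambda> ps) = (\<integral>\<^sup>+h. time_above \<theta> (ps, h) \<partial>?M)"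
    unfolding holding_kernel_def
    by (rule nn_integral_distr[OF measurable_Pair_holding_times]) (simp add: measurable_time_above)
  ultimately have "(\<integral>\<^sup>+\<omega>. time_above \<theta> \<omega> \<partial>holding_kernel \<Lambda> ps) = (\<integral>\<^sup>+h. (\<Sum>i<K. ennreal (h i)) \<partial>?M)"
    by simp
  also have "\<dots> = (\<Sum>i<K. \<integral>\<^sup>+h. ennreal (h i) \<partial>?M)"
    by (rule nn_integral_sum) measurable
  also have "\<dots> = (\<Sum>i<K. ennreal (1 / total_rate \<Lambda> (ps ! i)))"
  proof (rule sum.cong[OF refl])
    fix i assume "i \<in> {..<K}"
    have "(\<integral>\<^sup>+h. ennreal (h i) \<partial>?M) = (\<integral>\<^sup>+x. ennreal x \<partial>distr ?M (exp_dist (?r i)) (\<lambda>h. h i))"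
      by (rule nn_integral_distr[symmetric])
         (simp_all add: measurable_cong_sets[OF sets_exp_dist refl])
    also have "distr ?M (exp_dist (?r i)) (\<lambda>h. h i) = exp_dist (?r i)"
      by (rule P.PiM_component) simp
    also have "(\<integral>\<^sup>+x. ennreal x \<partial>exp_dist (?r i)) = ennreal (1 / ?r i)"
      by (rule nn_integral_exp_dist[OF pos_hold_rate_pos])
    also have "?r i = total_rate \<Lambda> (ps ! i)"
      using rate \<open>i \<in> {..<K}\<close> by (simp add: pos_hold_rate_def hold_rate_eq)
    finally show "(\<integral>\<^sup>+h. ennreal (h i) \<partial>?M) = ennreal (1 / total_rate \<Lambda> (ps ! i))" .
  qed
  also have "\<dots> = mean_time_above \<Lambda> \<theta> ps"
    unfolding mean_time_above_def K_def[symmetric]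
    using rate by (intro sum_ennreal) (simp add: less_imp_le)
  finally show ?thesis .
qed

lemma card_singleton_partition: "card (singleton_partition n) = n"
  unfolding singleton_partition_def by (subst card_image) (auto simp: inj_on_def)

lemma finite_singleton_partition: "finite (singleton_partition n)"
  unfolding singleton_partition_def by simp

context lambda_coalescent
begin

lemma hold_rate_pos:
  assumes "jump_path_invariant m P ps"
  shows "0 < hold_rate \<Lambda> ps i"
proof (cases "Suc i < length ps")
  case True
  then have "finite (ps ! i)" "2 \<le> card (ps ! i)"
    using assms unfolding jump_path_invariant_def by (auto simp: nth_mem)
  then show ?thesis
    using True total_rate_pos unfolding hold_rate_def by simp
qed (simp add: hold_rate_def)

lemma nn_integral_hitting_time_le:
  assumes "0 < \<gamma>" "1 \<le> \<gamma> * real n"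
  shows "(\<integral>\<^sup>+\<omega>. hitting_time \<gamma> n \<omega> \<partial>coalescent_measure \<Lambda> n) \<le> ennreal (2 / (mass * \<gamma>))"
proof -
  define \<theta> where "\<theta> = \<gamma> * real n"
  define J where "J = jump_path \<Lambda> n (singleton_partition n)"
  have "1 \<le> \<theta>"
    using assms(2) unfolding \<theta>_def .
  have "0 < n"
    using assms(2) by (cases n) auto
  have invariant: "jump_path_invariant (card (singleton_partition n)) (singleton_partition n) ps"
    if "ps \<in> set_pmf J" for ps
    using that set_pmf_jump_path_invariant[OF finite_singleton_partition]
    unfolding J_def card_singleton_partition by simp
  have pos: "0 < hold_rate \<Lambda> ps i" if "ps \<in> set_pmf J" for ps i
    using invariant[OF that] by (rule hold_rate_pos)
  have "(\<integral>\<^sup>+\<omega>. hitting_time \<gamma> n \<omega> \<partial>coalescent_measure \<Lambda> n)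
      \<le> (\<integral>\<^sup>+\<omega>. time_above \<theta> \<omega> \<partial>coalescent_measure \<Lambda> n)"
    unfolding \<theta>_def by (intro nn_integral_mono hitting_time_le_time_above)
  also have "\<dots> = (\<integral>\<^sup>+ps. (\<integral>\<^sup>+\<omega>. time_above \<theta> \<omega> \<partial>holding_kernel \<Lambda> ps) \<partial>J)"
  proof -
    have "coalescent_measure \<Lambda> n = measure_pmf J \<bind> holding_kernel \<Lambda>"
      unfolding J_def using pos by (rule coalescent_measure_eq_bind) (simp add: J_def)
    then show ?thesis
      by (simp add: nn_integral_bind[OF measurable_time_above] holding_kernel_subprob)
  qed
  also have "\<dots> = (\<integral>\<^sup>+ps. mean_time_above \<Lambda> \<theta> ps \<partial>J)"
    using invariant assms(2) pos unfolding \<theta>_def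
    by (intro nn_integral_cong_AE AE_pmfI nn_integral_time_above_holding_kernel
        jump_path_invariant_crosses_threshold) auto
  also have "\<dots> \<le> 2 / (mass * \<theta>) * real (card (singleton_partition n))"
    unfolding J_def using mass_pos \<open>1 \<le> \<theta>\<close>
    by (intro nn_integral_mean_time_above_le finite_singleton_partition) simp_all
  also have "2 / (mass * \<theta>) * real (card (singleton_partition n)) = 2 / (mass * \<gamma>)"
    using assms(1) mass_pos \<open>0 < n\<close> unfolding \<theta>_def card_singleton_partition
    by (simp add: field_simps)
  finally show ?thesis .
qed

end

theorem mainTheorem6:
  fixes \<Lambda> :: "real measure" and \<gamma> :: real
  assumes "finite_measure \<Lambda>"
    and "sets \<Lambda> = sets borel"
    and "emeasure \<Lambda> (- {0..1}) = 0"
    and "emeasure \<Lambda> {0..1} \<noteq> 0"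
    and "0 < \<gamma>" and "\<gamma> < 1"
  shows "\<exists>C>0. \<forall>n\<ge>2. 1 \<le> \<gamma> * real n \<longrightarrow>
           (\<integral>\<^sup>+\<omega>. hitting_time \<gamma> n \<omega> \<partial>coalescent_measure \<Lambda> n) \<le> ennreal C"
proof -
  interpret lambda_coalescent \<Lambda>
    by (rule lambda_coalescent.intro[OF assms(1-4)])
  show ?thesis
    using nn_integral_hitting_time_le assms(5) mass_pos
    by (intro exI[of _ "2 / (mass * \<gamma>)"]) auto
qed

end
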